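(* For $\varepsilon \in [0,1]$, let $F_{\varepsilon}^c$ denote the problem: minimize $\|\bm d\|_1 = \sum_{i \in \mathcal D} d_i$ over all $(\bm\theta, \bm p, \bm d) \in \mathcal X_{\mathrm{DC}}$ satisfying $\left(1-\varepsilon + \varepsilon\sqrt{|\mathcal D|}\right)\|\bm d\|_2 \leqslant \|\bm d\|_1$, with optimal load-shed vector $\bm z^*(F_{\varepsilon}^c)$. Let $\bm v^*$ be an optimal load-shed vector of the minimum load shedding problem $\min\{\|\bm d\|_1 : (\bm\theta,\bm p,\bm d) \in \mathcal X_{\mathrm{DC}}\}$, and assume $\|\bm v^*\|_1 > 0$. Define the price of fairness $$\mathrm{POF}(F_{\varepsilon}^c) = \frac{\|\bm z^*(F_{\varepsilon}^c)\|_1 - \|\bm v^*\|_1}{\|\bm v^*\|_1}.$$ Then $\mathrm{POF}(F_{\varepsilon}^c)$ is an increasing (non-decreasing) function of $\varepsilon$ on the feasibility domain, i.e., the set of $\varepsilon \in [0,1]$ for which $F_{\varepsilon}^c$ is feasible.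
   Context: A damaged power network has undamaged lines $\mathcal L$, buses $\mathcal B$, generators $\mathcal G$ and loads $\mathcal D$. Decision variables: phase angles $\theta_b$ ($b \in \mathcal B$), generation $p_g$ ($g \in \mathcal G$), and load shed $d_i$ ($i \in \mathcal D$). Parameters: thermal limits $p_{ij}^{\max}$ and susceptances $b_{ij}$ for $(i,j) \in \mathcal L$, generation limits $p_g^{\min}, p_g^{\max}$, and active demands $d_i^{\max}$. The feasible set $\mathcal X_{\mathrm{DC}}$ consists of all $(\bm\theta,\bm p,\bm d)$ with $\sum_{g \in \mathcal G} p_g = \sum_{i \in \mathcal D}(d_i^{\max} - d_i)$, $p_g \in [p_g^{\min}, p_g^{\max}]$ for all $g$, $d_i \in [0, d_i^{\max}]$ for all $i$, and $-p_{ij}^{\max} \leqslant b_{ij}(\theta_i - \theta_j) \leqslant p_{ij}^{\max}$ for all $(i,j) \in \mathcal L$. Here $\|\cdot\|_1$ and $\|\cdot\|_2$ are the usual $\ell^1$ and $\ell^2$ norms. *)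

theory Defs
  imports "HOL-Analysis.Analysis"
begin

text \<open>Data of a damaged DC power network: buses B, undamaged lines L, generators G, loads D,
  thermal limits, susceptances, generation limits and active demands.\<close>
record ('b, 'g, 'l) network =
  buses  :: "'b set"
  lines  :: "('b \<times> 'b) set"
  gens   :: "'g set"
  loads  :: "'l set"
  pmax   :: "'b \<Rightarrow> 'b \<Rightarrow> real"
  susc   :: "'b \<Rightarrow> 'b \<Rightarrow> real"
  pgmin  :: "'g \<Rightarrow> real"
  pgmax  :: "'g \<Rightarrow> real"
  dmax   :: "'l \<Rightarrow> real"

definition wf_network :: "('b, 'g, 'l) network \<Rightarrow> bool" where
  "wf_network N \<longleftrightarrow> finite (buses N) \<and> finite (gens N) \<and> finite (loads N)
     \<and> lines N \<subseteq> buses N \<times> buses N"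

definition X_DC :: "('b, 'g, 'l) network \<Rightarrow> ('b \<Rightarrow> real) \<Rightarrow> ('g \<Rightarrow> real) \<Rightarrow> ('l \<Rightarrow> real) \<Rightarrow> bool" where
  "X_DC N \<theta> p d \<longleftrightarrow>
     (\<Sum>g\<in>gens N. p g) = (\<Sum>i\<in>loads N. dmax N i - d i)
   \<and> (\<forall>g\<in>gens N. pgmin N g \<le> p g \<and> p g \<le> pgmax N g)
   \<and> (\<forall>i\<in>loads N. 0 \<le> d i \<and> d i \<le> dmax N i)
   \<and> (\<forall>(i, j)\<in>lines N. - pmax N i j \<le> susc N i j * (\<theta> i - \<theta> j)
                        \<and> susc N i j * (\<theta> i - \<theta> j) \<le> pmax N i j)"

definition norm1 :: "'l set \<Rightarrow> ('l \<Rightarrow> real) \<Rightarrow> real" where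
  "norm1 D d = (\<Sum>i\<in>D. \<bar>d i\<bar>)"

definition norm2 :: "'l set \<Rightarrow> ('l \<Rightarrow> real) \<Rightarrow> real" where
  "norm2 D d = sqrt (\<Sum>i\<in>D. (d i)\<^sup>2)"

definition Fc_feasible :: "('b, 'g, 'l) network \<Rightarrow> real \<Rightarrow> ('b \<Rightarrow> real) \<Rightarrow> ('g \<Rightarrow> real) \<Rightarrow> ('l \<Rightarrow> real) \<Rightarrow> bool" where
  "Fc_feasible N \<epsilon> \<theta> p d \<longleftrightarrow> X_DC N \<theta> p d
     \<and> (1 - \<epsilon> + \<epsilon> * sqrt (real (card (loads N)))) * norm2 (loads N) d \<le> norm1 (loads N) d"

definition Fc_optimal :: "('b, 'g, 'l) network \<Rightarrow> real \<Rightarrow> ('l \<Rightarrow> real) \<Rightarrow> bool" where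
  "Fc_optimal N \<epsilon> z \<longleftrightarrow> (\<exists>\<theta> p. Fc_feasible N \<epsilon> \<theta> p z)
     \<and> (\<forall>\<theta> p d. Fc_feasible N \<epsilon> \<theta> p d \<longrightarrow> norm1 (loads N) z \<le> norm1 (loads N) d)"

definition MLS_optimal :: "('b, 'g, 'l) network \<Rightarrow> ('l \<Rightarrow> real) \<Rightarrow> bool" where
  "MLS_optimal N v \<longleftrightarrow> (\<exists>\<theta> p. X_DC N \<theta> p v)
     \<and> (\<forall>\<theta> p d. X_DC N \<theta> p d \<longrightarrow> norm1 (loads N) v \<le> norm1 (loads N) d)"

definition POF :: "('b, 'g, 'l) network \<Rightarrow> ('l \<Rightarrow> real) \<Rightarrow> ('l \<Rightarrow> real) \<Rightarrow> real" where
  "POF N z v = (norm1 (loads N) z - norm1 (loads N) v) / norm1 (loads N) v"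

end

theory Submission
  imports Defs
begin

text \<open>Since \<open>sqrt |D| \<ge> 1\<close> whenever \<open>D\<close> is nonempty, the coefficient
  \<open>1 - \<epsilon> + \<epsilon> sqrt |D|\<close> grows with \<open>\<epsilon>\<close>, so the feasible sets of \<open>F\<^sup>c\<^sub>\<epsilon>\<close> shrink
  as \<open>\<epsilon>\<close> grows. A minimum over a smaller set is larger, hence the optimal load shed,
  and with it the price of fairness, is non-decreasing in \<open>\<epsilon>\<close>.\<close>

lemma norm2_nonneg: "0 \<le> norm2 D d"
  by (simp add: norm2_def sum_nonneg)

text \<open>This covers an infinite \<open>D\<close> too, where the sum is \<open>0\<close> by convention.\<close>
lemma norm2_card_0: "card D = 0 \<Longrightarrow> norm2 D d = 0"
  by (cases "finite D") (auto simp: norm2_def)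

lemma fairness_coeff_mono:
  fixes c \<epsilon>1 \<epsilon>2 :: real
  assumes "1 \<le> c" and "\<epsilon>1 \<le> \<epsilon>2"
  shows "1 - \<epsilon>1 + \<epsilon>1 * c \<le> 1 - \<epsilon>2 + \<epsilon>2 * c"
proof -
  have "0 \<le> (\<epsilon>2 - \<epsilon>1) * (c - 1)"
    using assms by simp
  then show ?thesis
    by (simp add: algebra_simps)
qed

lemma Fc_feasible_antimono:
  assumes "\<epsilon>1 \<le> \<epsilon>2" and "Fc_feasible N \<epsilon>2 \<theta> p d"
  shows "Fc_feasible N \<epsilon>1 \<theta> p d"
proof (cases "card (loads N) = 0")
  case True
  then show ?thesis
    using assms(2) by (simp add: Fc_feasible_def norm2_card_0)
next
  case False
  let ?c = "sqrt (real (card (loads N)))"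
  have "1 \<le> ?c"
    using False by simp
  then have "(1 - \<epsilon>1 + \<epsilon>1 * ?c) * norm2 (loads N) d \<le> (1 - \<epsilon>2 + \<epsilon>2 * ?c) * norm2 (loads N) d"
    using fairness_coeff_mono[OF _ assms(1)] norm2_nonneg by (intro mult_right_mono)
  then show ?thesis
    using assms(2) unfolding Fc_feasible_def by linarith
qed

lemma Fc_optimal_norm1_mono:
  assumes "\<epsilon>1 \<le> \<epsilon>2" and "Fc_optimal N \<epsilon>1 z1" and "Fc_optimal N \<epsilon>2 z2"
  shows "norm1 (loads N) z1 \<le> norm1 (loads N) z2"
proof -
  obtain \<theta> p where "Fc_feasible N \<epsilon>2 \<theta> p z2"
    using assms(3) by (auto simp: Fc_optimal_def)
  with assms(1) have "Fc_feasible N \<epsilon>1 \<theta> p z2"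
    by (rule Fc_feasible_antimono)
  then show ?thesis
    using assms(2) by (auto simp: Fc_optimal_def)
qed

lemma POF_mono:
  assumes "0 < norm1 (loads N) v" and "norm1 (loads N) z1 \<le> norm1 (loads N) z2"
  shows "POF N z1 v \<le> POF N z2 v"
  unfolding POF_def using assms by (simp add: divide_right_mono)

theorem corollary1:
  fixes N :: "('b, 'g, 'l) network"
    and v z1 z2 :: "'l \<Rightarrow> real"
    and \<epsilon>1 \<epsilon>2 :: real
  assumes "wf_network N"
    and "MLS_optimal N v"
    and "norm1 (loads N) v > 0"
    and "0 \<le> \<epsilon>1" and "\<epsilon>1 \<le> \<epsilon>2" and "\<epsilon>2 \<le> 1"
    and "Fc_optimal N \<epsilon>1 z1"
    and "Fc_optimal N \<epsilon>2 z2"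
  shows "POF N z1 v \<le> POF N z2 v"
  using assms(3) Fc_optimal_norm1_mono[OF assms(5,7,8)] by (rule POF_mono)

end
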